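(* Let $(N,{\mathcal{S}},K)$ be an instance of MaxCover with $|{\mathcal{S}}|=m\ge K$ sets, where every element of $N$ belongs to at least $p\ge1$ sets of ${\mathcal{S}}$. Then the greedy algorithm returns $K$ sets covering at least $\left(1-e^{-\max(pK/m,\,1)}\right)\cdot\mathrm{OPT}$ elements, where $\mathrm{OPT}$ is the maximum number of elements coverable by $K$ sets of ${\mathcal{S}}$.
   Context: The greedy algorithm: start with $C=\emptyset$; for $i=1,\dots,K$, add to $C$ a set $S\in{\mathcal{S}}\setminus C$ maximizing $|S\setminus\bigcup_{T\in C}T|$ (ties broken arbitrarily); return $C$. *)

theory Defs
  imports "HOL-Analysis.Analysis"
begin

definition maxcover_instance :: "'a set \<Rightarrow> 'a set set \<Rightarrow> bool" where
  "maxcover_instance N S \<longleftrightarrow> finite N \<and> finite S \<and> (\<forall>T\<in>S. T \<subseteq> N)"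

definition gain :: "'a set set \<Rightarrow> 'a set \<Rightarrow> nat" where
  "gain C T = card (T - \<Union>C)"

definition greedy_step :: "'a set set \<Rightarrow> 'a set set \<Rightarrow> 'a set \<Rightarrow> bool" where
  "greedy_step S C T \<longleftrightarrow> T \<in> S - C \<and> (\<forall>T'\<in>S - C. gain C T' \<le> gain C T)"

definition greedy_run :: "'a set set \<Rightarrow> nat \<Rightarrow> 'a set list \<Rightarrow> bool" where
  "greedy_run S K cs \<longleftrightarrow> length cs = K \<and>
     (\<forall>i<K. greedy_step S (set (take i cs)) (cs ! i))"

definition OPT :: "'a set set \<Rightarrow> nat \<Rightarrow> nat" where
  "OPT S K = Max {card (\<Union>C) | C. C \<subseteq> S \<and> card C = K}"

end

theory Submission
  imports Defs
begin

text \<open>At step \<open>i\<close> the greedy gain \<open>g\<close> dominates the gain of every other set. An optimal family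
  of \<open>K\<close> sets covers its still uncovered part with total gain at most \<open>K g\<close>, so
  \<open>g \<ge> (OPT - cov)/K\<close>; double counting the incidences of the uncovered elements, each lying in
  at least \<open>p\<close> of the \<open>m\<close> sets, gives \<open>g \<ge> (p/m) (|N| - cov)\<close>. Either inequality shrinks the
  deficit by a constant factor per step, and \<open>(1 - a)^K \<le> exp (- a K)\<close> turns this into coverage
  at least \<open>(1 - exp (- 1)) OPT\<close>, resp. \<open>(1 - exp (- p K / m)) |N| \<ge> (1 - exp (- p K / m)) OPT\<close>.\<close>

lemma geometric_decay_le_exp:
  fixes u :: "nat \<Rightarrow> real"
  assumes "0 \<le> a" "a \<le> 1" "u 0 \<ge> 0" "\<And>i. i < K \<Longrightarrow> u (Suc i) \<le> (1 - a) * u i"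
  shows "u K \<le> exp (- (a * K)) * u 0"
proof -
  have "u K \<le> (1 - a) ^ K * u 0"
    using assms(4)
  proof (induction K)
    case (Suc K)
    then have "(1 - a) * u K \<le> (1 - a) * ((1 - a) ^ K * u 0)"
      using assms(2) by (intro mult_left_mono) auto
    then show ?case using Suc.prems[of K] by (simp add: algebra_simps)
  qed simp
  also have "(1 - a) ^ K \<le> exp (- a) ^ K"
    using assms(2) exp_ge_add_one_self[of "- a"] by (intro power_mono) auto
  also have "exp (- a) ^ K = exp (- (a * K))"
    by (metis exp_of_nat_mult mult.commute mult_minus_right)
  finally show ?thesis using assms(3) by (simp add: mult_right_mono)
qed

lemma card_Union_insert_gain:
  assumes "finite T" "finite (\<Union>C)"
  shows "card (\<Union>(insert T C)) = card (\<Union>C) + gain C T"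
proof -
  have "\<Union>(insert T C) = (T - \<Union>C) \<union> \<Union>C" by auto
  moreover have "card ((T - \<Union>C) \<union> \<Union>C) = card (T - \<Union>C) + card (\<Union>C)"
    using assms by (intro card_Un_disjoint) auto
  ultimately show ?thesis by (simp add: gain_def)
qed

lemma gain_in_family:
  assumes "T \<in> C"
  shows "gain C T = 0"
proof -
  have "T - \<Union>C = {}" using assms by blast
  then show ?thesis unfolding gain_def by (simp only: card.empty)
qed

lemma greedy_step_gain_max:
  assumes "greedy_step S C T" "T' \<in> S"
  shows "gain C T' \<le> gain C T"
  using assms gain_in_family[of T' C] unfolding greedy_step_def by (cases "T' \<in> C") auto

lemma greedy_run_set_subset:
  assumes "greedy_run S K cs"
  shows "set cs \<subseteq> S"
proof
  fix T assume "T \<in> set cs"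
  then obtain i where "i < K" "T = cs ! i"
    using assms by (auto simp: greedy_run_def in_set_conv_nth)
  then show "T \<in> S" using assms by (auto simp: greedy_run_def greedy_step_def)
qed

lemma greedy_run_take_subset:
  assumes "greedy_run S K cs"
  shows "set (take i cs) \<subseteq> S"
  using set_take_subset greedy_run_set_subset[OF assms] by (rule order_trans)

lemma greedy_run_distinct:
  assumes run: "greedy_run S K cs"
  shows "distinct cs"
proof -
  have len: "length cs = K" using run by (simp add: greedy_run_def)
  have earlier_ne: "cs ! i \<noteq> cs ! j" if "i < j" "j < K" for i j
  proof -
    have "cs ! i \<in> set (take j cs)"
      using that len by (auto simp: in_set_conv_nth)
    then show ?thesis
      using that run by (auto simp: greedy_run_def greedy_step_def)
  qed
  show ?thesis
    unfolding distinct_conv_nth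
  proof (intro allI impI)
    fix i j assume "i < length cs" "j < length cs" "i \<noteq> j"
    then consider "i < j" "j < K" | "j < i" "i < K" using len by linarith
    then show "cs ! i \<noteq> cs ! j" by cases (auto dest: earlier_ne)
  qed
qed

lemma greedy_run_coverage_ge:
  fixes a B :: real
  assumes run: "greedy_run S K cs" and fin: "\<forall>T\<in>S. finite T"
    and "0 \<le> a" "a \<le> 1" "0 \<le> B"
    and step: "\<And>i. i < K \<Longrightarrow>
      a * (B - card (\<Union>(set (take i cs)))) \<le> gain (set (take i cs)) (cs ! i)"
  shows "(1 - exp (- (a * K))) * B \<le> card (\<Union>(set cs))"
proof -
  define cov where "cov i = real (card (\<Union>(set (take i cs))))" for i
  have len: "length cs = K" using run unfolding greedy_run_def by blast
  have cov_Suc: "cov (Suc i) = cov i + gain (set (take i cs)) (cs ! i)" if "i < K" for i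
  proof -
    have "cs ! i \<in> set cs" using that len by simp
    then have "set (take i cs) \<subseteq> S" "cs ! i \<in> S"
      using greedy_run_set_subset[OF run] greedy_run_take_subset[OF run] by auto
    then have "finite (cs ! i)" "finite (\<Union>(set (take i cs)))"
      using fin by auto
    moreover have "set (take (Suc i) cs) = insert (cs ! i) (set (take i cs))"
      using that len by (simp add: take_Suc_conv_app_nth)
    ultimately show ?thesis
      unfolding cov_def by (simp only: card_Union_insert_gain of_nat_add)
  qed
  have "B - cov K \<le> exp (- (a * K)) * (B - cov 0)"
  proof (rule geometric_decay_le_exp)
    fix i assume "i < K"
    then show "B - cov (Suc i) \<le> (1 - a) * (B - cov i)"
      using step[of i] cov_Suc[of i] by (simp add: cov_def algebra_simps)
  qed (use assms in \<open>auto simp: cov_def\<close>)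
  then show ?thesis using len by (simp add: cov_def algebra_simps)
qed

lemma greedy_step_gain_ge_subfamily:
  assumes "greedy_step S C T" "D \<subseteq> S" "finite D"
  shows "card (\<Union>D - \<Union>C) \<le> card D * gain C T"
proof -
  have "\<Union>D - \<Union>C = (\<Union>T'\<in>D. T' - \<Union>C)" by auto
  then have "card (\<Union>D - \<Union>C) \<le> (\<Sum>T'\<in>D. gain C T')"
    using card_UN_le[OF assms(3), of "\<lambda>T'. T' - \<Union>C"] by (simp add: gain_def)
  also have "\<dots> \<le> (\<Sum>T'\<in>D. gain C T)"
  proof (rule sum_mono)
    fix T' assume "T' \<in> D"
    then show "gain C T' \<le> gain C T" using assms(1,2) by (auto intro: greedy_step_gain_max)
  qed
  finally show ?thesis by simp
qed

lemma sum_card_incidences: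
  assumes "finite S" "finite U"
  shows "(\<Sum>x\<in>U. card {T\<in>S. x \<in> T}) = (\<Sum>T\<in>S. card (T \<inter> U))"
proof -
  have "(\<Sum>x\<in>U. card {T\<in>S. x \<in> T}) = (\<Sum>x\<in>U. \<Sum>T\<in>S. if x \<in> T then 1 else 0)"
    using sum.inter_filter[OF assms(1), of "\<lambda>_. 1::nat"] by simp
  also have "\<dots> = (\<Sum>T\<in>S. \<Sum>x\<in>U. if x \<in> T then 1 else 0)" by (rule sum.swap)
  also have "\<dots> = (\<Sum>T\<in>S. card (T \<inter> U))"
  proof (rule sum.cong[OF refl])
    fix T
    have "{x\<in>U. x \<in> T} = T \<inter> U" by blast
    then show "(\<Sum>x\<in>U. if x \<in> T then 1 else 0) = card (T \<inter> U)"
      using sum.inter_filter[OF assms(2), of "\<lambda>_. 1::nat" "\<lambda>x. x \<in> T"] by simp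
  qed
  finally show ?thesis .
qed

lemma greedy_step_gain_ge_degree:
  assumes inst: "maxcover_instance N S" and step: "greedy_step S C T"
    and deg: "\<forall>x\<in>N. p \<le> card {T\<in>S. x \<in> T}"
  shows "p * card (N - \<Union>C) \<le> card S * gain C T"
proof -
  define U where "U = N - \<Union>C"
  have fin: "finite S" "finite U" and sub: "\<And>T'. T' \<in> S \<Longrightarrow> T' \<subseteq> N"
    using inst by (auto simp: maxcover_instance_def U_def)
  have "p * card U = (\<Sum>x\<in>U. p)" by simp
  also have "\<dots> \<le> (\<Sum>x\<in>U. card {T\<in>S. x \<in> T})"
    using deg by (intro sum_mono) (auto simp: U_def)
  also have "\<dots> = (\<Sum>T'\<in>S. card (T' \<inter> U))" by (rule sum_card_incidences[OF fin])
  also have "\<dots> = (\<Sum>T'\<in>S. gain C T')"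
  proof (rule sum.cong[OF refl])
    fix T' assume "T' \<in> S"
    then have "T' \<inter> U = T' - \<Union>C" using sub unfolding U_def by blast
    then show "card (T' \<inter> U) = gain C T'" by (simp add: gain_def)
  qed
  also have "\<dots> \<le> card S * gain C T"
    using sum_bounded_above[of S "gain C" "gain C T"] greedy_step_gain_max[OF step] by auto
  finally show ?thesis unfolding U_def .
qed

lemma OPT_attained:
  assumes "finite S" "K \<le> card S"
  obtains D where "D \<subseteq> S" "card D = K" "card (\<Union>D) = OPT S K"
proof -
  define Q where "Q = {card (\<Union>C) | C. C \<subseteq> S \<and> card C = K}"
  have "Q \<subseteq> (\<lambda>C. card (\<Union>C)) ` Pow S" unfolding Q_def by auto
  then have "finite Q" using assms(1) by (meson finite_Pow_iff finite_imageI finite_subset)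
  moreover obtain C0 where "C0 \<subseteq> S" "card C0 = K"
    using assms obtain_subset_with_card_n by metis
  then have "Q \<noteq> {}" unfolding Q_def by auto
  ultimately have "Max Q \<in> Q" by (rule Max_in)
  then show ?thesis using that unfolding Q_def OPT_def by auto
qed

lemma greedy_run_ge_OPT:
  assumes run: "greedy_run S K cs" and finS: "finite S" and fin: "\<forall>T\<in>S. finite T"
    and "K \<le> card S"
  shows "(1 - exp (- 1)) * OPT S K \<le> card (\<Union>(set cs))"
proof -
  obtain D where D: "D \<subseteq> S" "card D = K" "card (\<Union>D) = OPT S K"
    using OPT_attained finS assms(4) by blast
  have finD: "finite D" using D(1) finS by (rule finite_subset)
  show ?thesis
  proof (cases "K = 0")
    case True
    then have "D = {}" using D(2) finD by simp
    then show ?thesis using D by simp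
  next
    case False
    have "(1 - exp (- (1 / K * K))) * OPT S K \<le> card (\<Union>(set cs))"
    proof (rule greedy_run_coverage_ge[OF run fin])
      fix i assume "i < K"
      let ?C = "set (take i cs)"
      have step: "greedy_step S ?C (cs ! i)"
        using run \<open>i < K\<close> unfolding greedy_run_def by blast
      have "?C \<subseteq> S" by (rule greedy_run_take_subset[OF run])
      then have "finite (\<Union>?C)" using fin by (intro finite_Union) auto
      moreover have "\<Union>D \<subseteq> (\<Union>D - \<Union>?C) \<union> \<Union>?C" by blast
      ultimately have "card (\<Union>D) \<le> card ((\<Union>D - \<Union>?C) \<union> \<Union>?C)"
        using finD D(1) fin by (intro card_mono) auto
      also have "\<dots> \<le> card (\<Union>D - \<Union>?C) + card (\<Union>?C)" by (rule card_Un_le)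
      also have "\<dots> \<le> K * gain ?C (cs ! i) + card (\<Union>?C)"
        using greedy_step_gain_ge_subfamily[OF step D(1) finD] D(2) by simp
      finally have "real (OPT S K) - card (\<Union>?C) \<le> real K * gain ?C (cs ! i)"
        using D(3) by (simp flip: of_nat_mult of_nat_add)
      then show "1 / K * (real (OPT S K) - card (\<Union>?C)) \<le> gain ?C (cs ! i)"
        using False by (simp add: field_simps)
    qed (use False in auto)
    then show ?thesis using False by simp
  qed
qed

lemma greedy_run_ge_degree_bound:
  assumes run: "greedy_run S K cs" and inst: "maxcover_instance N S"
    and deg: "\<forall>x\<in>N. p \<le> card {T\<in>S. x \<in> T}"
  shows "(1 - exp (- (real p * K / card S))) * card N \<le> card (\<Union>(set cs))"
proof (cases "N = {}")
  case False
  have finS: "finite S" and sub: "\<And>T. T \<in> S \<Longrightarrow> T \<subseteq> N" and finN: "finite N"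
    using inst by (auto simp: maxcover_instance_def)
  obtain x where "x \<in> N" using False by auto
  then have "p \<le> card {T\<in>S. x \<in> T}" using deg by blast
  also have "\<dots> \<le> card S" using finS by (intro card_mono) auto
  finally have "p \<le> card S" .
  have fin: "\<forall>T\<in>S. finite T" using sub finN finite_subset by blast
  have "(1 - exp (- (real p / card S * K))) * card N \<le> card (\<Union>(set cs))"
  proof (rule greedy_run_coverage_ge[OF run fin])
    fix i assume "i < K"
    let ?C = "set (take i cs)"
    have step: "greedy_step S ?C (cs ! i)"
      using run \<open>i < K\<close> unfolding greedy_run_def by blast
    have "\<Union>?C \<subseteq> N"
      using greedy_run_take_subset[OF run] sub by blast
    then have "real (card (N - \<Union>?C)) = real (card N) - card (\<Union>?C)"
      using finN by (simp add: card_Diff_subset card_mono finite_subset of_nat_diff)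
    then have "real p / card S * (real (card N) - card (\<Union>?C)) = real (p * card (N - \<Union>?C)) / card S"
      by simp
    also have "\<dots> \<le> real (card S * gain ?C (cs ! i)) / card S"
      using greedy_step_gain_ge_degree[OF inst step deg] by (intro divide_right_mono of_nat_mono) auto
    also have "\<dots> \<le> gain ?C (cs ! i)"
      by (cases "card S = 0") simp_all
    finally show "real p / card S * (real (card N) - card (\<Union>?C)) \<le> gain ?C (cs ! i)" .
  qed (use \<open>p \<le> card S\<close> in \<open>auto simp: divide_le_eq_1\<close>)
  then show ?thesis by (simp add: mult.commute)
qed simp

theorem mainTheorem8:
  fixes N :: "'a set" and S :: "'a set set" and K m p :: nat and cs :: "'a set list"
  assumes "maxcover_instance N S"
    and "card S = m" and "m \<ge> K"
    and "p \<ge> 1"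
    and "\<forall>x\<in>N. card {T\<in>S. x \<in> T} \<ge> p"
    and "greedy_run S K cs"
  shows "distinct cs \<and> set cs \<subseteq> S \<and> card (set cs) = K \<and>
         real (card (\<Union>(set cs))) \<ge>
           (1 - exp (- max (real p * real K / real m) 1)) * real (OPT S K)"
proof -
  have finS: "finite S" and sub: "\<forall>T\<in>S. T \<subseteq> N" and finN: "finite N"
    using assms(1) by (auto simp: maxcover_instance_def)
  then have fin: "\<forall>T\<in>S. finite T" using finite_subset by blast
  obtain D where D: "D \<subseteq> S" "card (\<Union>D) = OPT S K"
    using OPT_attained[OF finS] assms(2,3) by blast
  have "\<Union>D \<subseteq> N" using D(1) sub by blast
  with finN D(2) have "OPT S K \<le> card N" by (metis card_mono)
  then have "(1 - exp (- (real p * K / m))) * OPT S K \<le> (1 - exp (- (real p * K / m))) * card N"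
    by (intro mult_left_mono) auto
  also have "\<dots> \<le> card (\<Union>(set cs))"
    using greedy_run_ge_degree_bound[OF assms(6,1,5)] assms(2) by simp
  finally have "(1 - exp (- (real p * K / m))) * OPT S K \<le> card (\<Union>(set cs))" .
  moreover have "(1 - exp (- 1)) * OPT S K \<le> card (\<Union>(set cs))"
    using greedy_run_ge_OPT[OF assms(6) finS fin] assms(2,3) by simp
  moreover have "distinct cs" "length cs = K"
    using greedy_run_distinct[OF assms(6)] assms(6) by (auto simp: greedy_run_def)
  ultimately show ?thesis
    using greedy_run_set_subset[OF assms(6)] by (auto simp: max_def distinct_card)
qed

end
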